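(* Let $r\in(0,1]$, $\alpha\in(0,1]$, and for $\mu>0$ let $Y_{r,\alpha,\mu}$ be a random variable with $$Y_{r,\alpha,\mu}\stackrel{d}{=}\frac{S_{\alpha,1}Z_{r,\mu}^{1/\alpha}}{1+S_{\alpha,1}Z_{r,\mu}^{1/\alpha}}$$ ($S_{\alpha,1}$, $Z_{r,\mu}$ independent). Then, as $\mu\to0$, $$\mu^{-1/\alpha}Y_{r,\alpha,\mu}\Longrightarrow S_{\alpha,1}Z_{r,1}^{1/\alpha}\stackrel{d}{=}S_{\alpha,1}\cdot\Big(\frac{G_{r,1}+G_{1-r,1}}{G_{r,1}}\Big)^{1/\alpha},$$ where $S_{\alpha,1}$ and $Z_{r,1}$ (respectively $S_{\alpha,1}$, $G_{r,1}$, $G_{1-r,1}$) are independent; moreover, when $r\in(0,1)$ this limit also equals in distribution $S_{\alpha,1}\big(1+\frac{1-r}{r}Q_{1-r,r}\big)^{1/\alpha}$ with $S_{\alpha,1}$ and $Q_{1-r,r}$ independent.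
   Context: $\Longrightarrow$ denotes convergence in distribution and $\stackrel{d}{=}$ equality in distribution. $G_{s,1}$ is a gamma random variable with density $\frac1{\Gamma(s)}x^{s-1}e^{-x}$, $x\ge0$, for $s>0$, and $G_{0,1}:=0$. For $0<\alpha\le1$, $S_{\alpha,1}$ has characteristic function $\exp\{-|t|^{\alpha}\exp(-\tfrac12 i\pi\alpha\,\mathrm{sign}\,t)\}$ (degenerate at $1$ if $\alpha=1$). For $r\in(0,1]$, $\mu>0$, $Z_{r,\mu}=\mu(G_{r,1}+G_{1-r,1})/G_{r,1}$ with independent gamma factors. For $r\in(0,1)$, $Q_{1-r,r}$ has the Snedecor–Fisher density $q(x)=\frac{(1-r)^{1-r}r^r}{\Gamma(1-r)\Gamma(r)}\cdot\frac{1}{x^{r}[r+(1-r)x]}$, $x\ge0$. *)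

theory Defs
  imports "HOL-Probability.Probability"
begin

text \<open>Law of the gamma random variable G_{s,1}: density x^(s-1) e^(-x) / Gamma(s) on x > 0
  for s > 0, and the point mass at 0 for s = 0 (convention G_{0,1} := 0).\<close>
definition gamma_law :: "real \<Rightarrow> real measure" where
  "gamma_law s = (if s = 0 then return borel 0
     else density lborel (\<lambda>x. ennreal (indicator {0<..} x * (x powr (s - 1) * exp (- x) / Gamma s))))"

definition Z_law :: "real \<Rightarrow> real \<Rightarrow> real measure" where
  "Z_law r \<mu> = distr (gamma_law r \<Otimes>\<^sub>M gamma_law (1 - r)) borel
     (\<lambda>(g, h). \<mu> * (g + h) / g)"

definition Q_law :: "real \<Rightarrow> real measure" where
  "Q_law r = density lborel (\<lambda>x. ennreal (indicator {0<..} x *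
     ((1 - r) powr (1 - r) * r powr r / (Gamma (1 - r) * Gamma r)
      * (1 / (x powr r * (r + (1 - r) * x))))))"

text \<open>Convergence in distribution of a family of real laws along a filter:
  convergence of the cdfs at every continuity point of the limit cdf
  (the filter analogue of weak_conv_m).\<close>
definition weak_conv_filter :: "('b \<Rightarrow> real measure) \<Rightarrow> real measure \<Rightarrow> 'b filter \<Rightarrow> bool" where
  "weak_conv_filter M_fam M F \<longleftrightarrow>
     (\<forall>x. isCont (cdf M) x \<longrightarrow> ((\<lambda>\<mu>. cdf (M_fam \<mu>) x) \<longlongrightarrow> cdf M x) F)"

end

theory Submission
  imports Defs
begin

text \<open>
  Since Z_{r,mu} = mu Z_{r,1}, all laws involved are images of a single probability space
  carrying independent S, G_{r,1}, G_{1-r,1}, on which mu^(-1/alpha) Y = X / (1 + mu^(1/alpha) X)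
  with X = S Z_{r,1}^(1/alpha). This tends to X pointwise as mu -> 0, and almost sure convergence
  implies convergence in distribution. For the Snedecor--Fisher form write
  Z_{r,1} = 1 + G_{1-r,1} / G_{r,1}: a quotient of independent gamma variables has a beta prime
  density, here x^(-r) / ((1 + x) Gamma(r) Gamma(1 - r)), which is also the density of
  (1 - r)/r Q_{1-r,r}.
\<close>

lemma distr_density_lborel_scale:
  fixes f :: "real \<Rightarrow> real" and c :: real
  assumes [measurable]: "f \<in> borel_measurable borel" and c: "0 < c"
  shows "distr (density lborel (\<lambda>x. ennreal (f x))) borel (\<lambda>x. c * x)
       = density lborel (\<lambda>x. ennreal (f (x / c) / c))"
proof -
  have eq: "ennreal c * ennreal (f x / c) = ennreal (f x)" for x
    using c by (cases "f x \<ge> 0") (auto simp: ennreal_mult'[symmetric] ennreal_neg)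
  show ?thesis
    by (subst (2) lborel_real_affine[where c = c and t = 0])
       (use c in \<open>simp_all add: density_density_eq density_distr eq cong: distr_cong\<close>)
qed

lemma distr_density_pair_divide:
  fixes f g :: "real \<Rightarrow> real"
  assumes [measurable]: "f \<in> borel_measurable borel" "g \<in> borel_measurable borel"
    and f_nonneg: "\<And>x. 0 \<le> f x" and g_nonneg: "\<And>y. 0 \<le> g y"
    and f_supp: "\<And>x. x \<le> 0 \<Longrightarrow> f x = 0"
  shows "distr (density lborel (\<lambda>x. ennreal (f x)) \<Otimes>\<^sub>M density lborel (\<lambda>y. ennreal (g y))) borel
           (\<lambda>(x, y). y / x)
       = density lborel (\<lambda>z. \<integral>\<^sup>+x. ennreal (f x * x * g (x * z)) \<partial>lborel)"
proof (rule measure_eqI)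
  let ?F = "density lborel (\<lambda>x. ennreal (f x))" and ?G = "density lborel (\<lambda>y. ennreal (g y))"
  interpret G: sigma_finite_measure ?G
    by (subst sigma_finite_measure.sigma_finite_iff_density_finite[OF sigma_finite_lborel]) auto
  fix A assume "A \<in> sets (distr (?F \<Otimes>\<^sub>M ?G) borel (\<lambda>(x, y). y / x))"
  then have A[measurable]: "A \<in> sets borel" by simp
  have inner: "ennreal (f x) * (\<integral>\<^sup>+y. ennreal (g y) * indicator A (y / x) \<partial>lborel)
      = (\<integral>\<^sup>+z. ennreal (f x * x * g (x * z)) * indicator A z \<partial>lborel)" for x
  proof (cases "0 < x")
    case False
    then show ?thesis by (simp add: f_supp)
  next
    case True
    have "(\<integral>\<^sup>+y. ennreal (g y) * indicator A (y / x) \<partial>lborel)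
        = ennreal x * (\<integral>\<^sup>+z. ennreal (g (x * z)) * indicator A z \<partial>lborel)"
      using nn_integral_real_affine[of "\<lambda>y. ennreal (g y) * indicator A (y / x)" x 0] True by simp
    also have "\<dots> = (\<integral>\<^sup>+z. ennreal x * (ennreal (g (x * z)) * indicator A z) \<partial>lborel)"
      by (rule nn_integral_cmult[symmetric]) measurable
    finally have "ennreal (f x) * (\<integral>\<^sup>+y. ennreal (g y) * indicator A (y / x) \<partial>lborel)
        = (\<integral>\<^sup>+z. ennreal (f x) * (ennreal x * (ennreal (g (x * z)) * indicator A z)) \<partial>lborel)"
      by (simp add: nn_integral_cmult)
    also have "\<dots> = (\<integral>\<^sup>+z. ennreal (f x * x * g (x * z)) * indicator A z \<partial>lborel)"
      using True f_nonneg[of x] by (intro nn_integral_cong) (simp add: ennreal_mult' mult.assoc)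
    finally show ?thesis .
  qed
  have "emeasure (distr (?F \<Otimes>\<^sub>M ?G) borel (\<lambda>(x, y). y / x)) A
      = (\<integral>\<^sup>+p. indicator A p \<partial>distr (?F \<Otimes>\<^sub>M ?G) borel (\<lambda>(x, y). y / x))"
    by (rule nn_integral_indicator[symmetric]) simp
  also have "\<dots> = (\<integral>\<^sup>+p. indicator A ((\<lambda>(x, y). y / x) p) \<partial>(?F \<Otimes>\<^sub>M ?G))"
    by (rule nn_integral_distr) measurable
  also have "\<dots> = (\<integral>\<^sup>+x. \<integral>\<^sup>+y. indicator A (y / x) \<partial>?G \<partial>?F)"
    by (subst G.nn_integral_fst[symmetric]) simp_all
  also have "\<dots> = (\<integral>\<^sup>+x. ennreal (f x) * (\<integral>\<^sup>+y. ennreal (g y) * indicator A (y / x) \<partial>lborel) \<partial>lborel)"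
    by (subst nn_integral_density, measurable)+
  also have "\<dots> = (\<integral>\<^sup>+x. \<integral>\<^sup>+z. ennreal (f x * x * g (x * z)) * indicator A z \<partial>lborel \<partial>lborel)"
    by (simp only: inner)
  also have "\<dots> = (\<integral>\<^sup>+z. \<integral>\<^sup>+x. ennreal (f x * x * g (x * z)) * indicator A z \<partial>lborel \<partial>lborel)"
    by (rule lborel_pair.Fubini'[symmetric]) measurable
  also have "\<dots> = emeasure (density lborel (\<lambda>z. \<integral>\<^sup>+x. ennreal (f x * x * g (x * z)) \<partial>lborel)) A"
    by (subst emeasure_density) (simp_all add: nn_integral_multc)
  finally show "emeasure (distr (?F \<Otimes>\<^sub>M ?G) borel (\<lambda>(x, y). y / x)) A
      = emeasure (density lborel (\<lambda>z. \<integral>\<^sup>+x. ennreal (f x * x * g (x * z)) \<partial>lborel)) A" .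
qed simp

lemma AE_pair_measure_prodI:
  assumes "sigma_finite_measure M" "sigma_finite_measure N"
    and P: "AE x in M. P x" and Q: "AE y in N. Q y"
    and [measurable]: "Measurable.pred M P" "Measurable.pred N Q"
  shows "AE z in M \<Otimes>\<^sub>M N. P (fst z) \<and> Q (snd z)"
proof -
  interpret pair_sigma_finite M N
    using assms by (simp add: pair_sigma_finite_def)
  show ?thesis
  proof (rule AE_pair_measure)
    show "AE x in M. AE y in N. P (fst (x, y)) \<and> Q (snd (x, y))"
      using P by eventually_elim (use Q in auto)
  qed measurable
qed

lemma distr_pair_measure_distr_right:
  assumes N: "prob_space N" and [measurable]: "\<phi> \<in> measurable N K"
    and [measurable]: "F \<in> measurable (M \<Otimes>\<^sub>M K) L"
  shows "distr (M \<Otimes>\<^sub>M distr N K \<phi>) L F = distr (M \<Otimes>\<^sub>M N) L (\<lambda>(x, y). F (x, \<phi> y))"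
proof -
  have "sigma_finite_measure (distr N K \<phi>)"
    by (rule prob_space_imp_sigma_finite, rule prob_space.prob_space_distr[OF N]) measurable
  then have "M \<Otimes>\<^sub>M distr N K \<phi> = distr (M \<Otimes>\<^sub>M N) (M \<Otimes>\<^sub>M K) (\<lambda>(x, y). (x, \<phi> y))"
    using pair_measure_distr[OF measurable_ident_sets[OF refl], of \<phi> N K M] by simp
  then show ?thesis
    by (simp add: distr_distr o_def case_prod_unfold)
qed

lemma weak_conv_filter_at_right_0_of_AE_tendsto:
  fixes f :: "'a \<Rightarrow> real" and g :: "real \<Rightarrow> 'a \<Rightarrow> real"
  assumes P: "prob_space P" and [measurable]: "f \<in> borel_measurable P" "\<And>\<mu>. g \<mu> \<in> borel_measurable P"
    and lim: "AE \<omega> in P. ((\<lambda>\<mu>. g \<mu> \<omega>) \<longlongrightarrow> f \<omega>) (at_right 0)"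
  shows "weak_conv_filter (\<lambda>\<mu>. distr P borel (g \<mu>)) (distr P borel f) (at_right 0)"
  unfolding weak_conv_filter_def
proof (intro allI impI)
  interpret prob_space P by fact
  interpret D: real_distribution "distr P borel f" by simp
  fix x assume "isCont (cdf (distr P borel f)) x"
  then have "measure P (f -` {x} \<inter> space P) = 0"
    using D.isCont_cdf by (simp add: measure_distr)
  then have no_atom: "AE \<omega> in P. f \<omega> \<noteq> x"
    by (intro AE_I'[of "f -` {x} \<inter> space P"]) (auto simp: null_sets_def emeasure_eq_measure)
  have cdf_eq: "cdf (distr P borel h) x = (\<integral>\<omega>. indicator {..x} (h \<omega>) \<partial>P)"
    if [measurable]: "h \<in> borel_measurable P" for h :: "'a \<Rightarrow> real"
  proof -
    have "(\<integral>\<omega>. indicator {..x} (h \<omega>) \<partial>P) = (integral\<^sup>L (distr P borel h) (indicator {..x}) :: real)"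
      by (subst integral_distr) auto
    then show ?thesis
      by (simp add: cdf_def)
  qed
  have "((\<lambda>t. \<integral>\<omega>. indicator {..x} (g (inverse t) \<omega>) \<partial>P :: real)
        \<longlongrightarrow> \<integral>\<omega>. indicator {..x} (f \<omega>) \<partial>P) at_top"
  proof (rule integral_dominated_convergence_at_top[where w = "\<lambda>_. 1"])
    show "AE \<omega> in P. ((\<lambda>t. indicator {..x} (g (inverse t) \<omega>) :: real) \<longlongrightarrow> indicator {..x} (f \<omega>)) at_top"
      using lim no_atom
    proof eventually_elim
      case (elim \<omega>)
      then have "((\<lambda>t. g (inverse t) \<omega>) \<longlongrightarrow> f \<omega>) at_top"
        by (simp add: filterlim_at_right_to_top)
      moreover have "f \<omega> < x \<or> x < f \<omega>"
        using elim by linarith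
      ultimately have "eventually (\<lambda>t. indicator {..x} (g (inverse t) \<omega>) = (indicator {..x} (f \<omega>) :: real)) at_top"
        by (auto elim!: eventually_mono dest: order_tendstoD simp: indicator_def)
      then show ?case
        by (rule tendsto_eventually)
    qed
  qed auto
  then show "((\<lambda>\<mu>. cdf (distr P borel (g \<mu>)) x) \<longlongrightarrow> cdf (distr P borel f) x) (at_right 0)"
    by (simp add: cdf_eq filterlim_at_right_to_top)
qed

lemma tendsto_rescaled_fraction:
  fixes \<beta> w x :: real
  assumes \<beta>: "0 < \<beta>" and w: "0 < w"
  shows "((\<lambda>\<mu>. \<mu> powr (- \<beta>) * (x * (\<mu> * w) powr \<beta> / (1 + x * (\<mu> * w) powr \<beta>)))
           \<longlongrightarrow> x * w powr \<beta>) (at_right 0)"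
proof -
  let ?c = "x * w powr \<beta>"
  have "eventually (\<lambda>\<mu>. ?c / (1 + \<mu> powr \<beta> * ?c)
      = \<mu> powr (- \<beta>) * (x * (\<mu> * w) powr \<beta> / (1 + x * (\<mu> * w) powr \<beta>))) (at_right 0)"
    unfolding eventually_at_right_field
  proof (intro exI[of _ 1] conjI allI impI)
    fix \<mu> :: real assume "0 < \<mu>" "\<mu> < 1"
    then have "\<mu> powr (- \<beta>) * \<mu> powr \<beta> = 1" and "(\<mu> * w) powr \<beta> = \<mu> powr \<beta> * w powr \<beta>"
      using w by (simp_all add: powr_add[symmetric] powr_mult)
    then show "?c / (1 + \<mu> powr \<beta> * ?c)
        = \<mu> powr (- \<beta>) * (x * (\<mu> * w) powr \<beta> / (1 + x * (\<mu> * w) powr \<beta>))"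
      by (simp add: mult_ac)
  qed simp
  moreover have "((\<lambda>\<mu>. ?c / (1 + \<mu> powr \<beta> * ?c)) \<longlongrightarrow> ?c / (1 + 0 * ?c)) (at_right 0)"
    by (intro tendsto_intros tendsto_zero_powrI[OF _ tendsto_const] \<beta>)
       (auto intro!: tendsto_ident_at eventually_mono[OF eventually_at_right_less])
  ultimately show ?thesis
    by (simp add: tendsto_cong)
qed

definition gamma_density :: "real \<Rightarrow> real \<Rightarrow> real" where
  "gamma_density s x = indicator {0<..} x * (x powr (s - 1) * exp (- x) / Gamma s)"

definition beta_prime_density :: "real \<Rightarrow> real \<Rightarrow> real \<Rightarrow> real" where
  "beta_prime_density a b x = indicator {0<..} x * (x powr (a - 1) * (1 + x) powr (- (a + b)) / Beta a b)"

lemma borel_measurable_gamma_density[measurable]: "gamma_density s \<in> borel_measurable borel"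
  unfolding gamma_density_def by measurable

lemma sets_gamma_law [measurable_cong, simp]: "sets (gamma_law s) = sets borel"
  by (simp add: gamma_law_def)

lemma gamma_law_density: "s \<noteq> 0 \<Longrightarrow> gamma_law s = density lborel (\<lambda>x. ennreal (gamma_density s x))"
  by (simp add: gamma_law_def gamma_density_def)

lemma gamma_density_nonneg: "0 < s \<Longrightarrow> 0 \<le> gamma_density s x"
  by (simp add: gamma_density_def Gamma_real_pos)

lemma nn_integral_gamma_kernel:
  fixes s c :: real
  assumes s: "0 < s" and c: "0 < c"
  shows "(\<integral>\<^sup>+x. ennreal (indicator {0<..} x * x powr (s - 1) * exp (- (c * x))) \<partial>lborel)
       = ennreal (Gamma s / c powr s)"
proof -
  let ?I = "\<integral>\<^sup>+x. ennreal (indicator {0<..} x * x powr (s - 1) * exp (- (c * x))) \<partial>lborel"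
  have "ennreal (Gamma s) = (\<integral>\<^sup>+t. ennreal (indicator {0..} t * t powr (s - 1) / exp t) \<partial>lborel)"
    by (rule Gamma_conv_nn_integral_real[OF s])
  also have "\<dots> = ennreal c * (\<integral>\<^sup>+x. ennreal (indicator {0..} (c * x) * (c * x) powr (s - 1) / exp (c * x)) \<partial>lborel)"
    using nn_integral_real_affine[of "\<lambda>t. ennreal (indicator {0..} t * t powr (s - 1) / exp t)" c 0] c
    by simp
  also have "(\<integral>\<^sup>+x. ennreal (indicator {0..} (c * x) * (c * x) powr (s - 1) / exp (c * x)) \<partial>lborel)
      = (\<integral>\<^sup>+x. ennreal (c powr (s - 1)) * ennreal (indicator {0<..} x * x powr (s - 1) * exp (- (c * x))) \<partial>lborel)"
    using AE_lborel_singleton[of 0]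
    by (intro nn_integral_cong_AE, eventually_elim)
       (use c in \<open>auto simp: indicator_def ennreal_mult'[symmetric] powr_mult exp_minus
                              zero_le_mult_iff field_simps\<close>)
  also have "\<dots> = ennreal (c powr (s - 1)) * ?I"
    by (rule nn_integral_cmult) simp
  finally have Gamma_eq: "ennreal (Gamma s) = ennreal (c powr s) * ?I"
    using c by (simp add: mult.assoc[symmetric] ennreal_mult'[symmetric] powr_mult_base)
  have "ennreal (Gamma s / c powr s) = ennreal (1 / c powr s) * ennreal (Gamma s)"
    using c by (simp add: ennreal_mult'[symmetric])
  also have "\<dots> = (ennreal (1 / c powr s) * ennreal (c powr s)) * ?I"
    by (simp only: Gamma_eq mult.assoc)
  also have "ennreal (1 / c powr s) * ennreal (c powr s) = 1"
    using c by (simp add: ennreal_mult'[symmetric])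
  finally show ?thesis by simp
qed

lemma prob_space_gamma_law: "0 \<le> s \<Longrightarrow> prob_space (gamma_law s)"
proof (cases "s = 0")
  case True
  then show ?thesis by (simp add: gamma_law_def prob_space_return)
next
  case False
  assume "0 \<le> s"
  with False have s: "0 < s" by simp
  have kernel: "(\<integral>\<^sup>+x. ennreal (indicator {0<..} x * x powr (s - 1) * exp (- x)) \<partial>lborel) = ennreal (Gamma s)"
    using nn_integral_gamma_kernel[OF s, of 1] by simp
  have "(\<integral>\<^sup>+x. ennreal (gamma_density s x) \<partial>lborel)
      = (\<integral>\<^sup>+x. ennreal (indicator {0<..} x * x powr (s - 1) * exp (- x)) * ennreal (1 / Gamma s) \<partial>lborel)"
    using Gamma_real_pos[OF s]
    by (intro nn_integral_cong) (simp add: gamma_density_def ennreal_mult'[symmetric] indicator_def)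
  also have "\<dots> = ennreal (Gamma s) * ennreal (1 / Gamma s)"
    by (subst nn_integral_multc, measurable) (simp only: kernel)
  also have "\<dots> = 1"
    using Gamma_real_pos[OF s] by (simp add: ennreal_mult'[symmetric])
  finally show ?thesis
    using False by (intro prob_spaceI) (simp add: gamma_law_density emeasure_density)
qed

lemma AE_gamma_law_pos: "0 < s \<Longrightarrow> AE x in gamma_law s. 0 < x"
  unfolding gamma_law_def by (auto simp: AE_density indicator_def intro!: AE_I2)

lemma AE_gamma_law_nonneg: "0 \<le> s \<Longrightarrow> AE x in gamma_law s. 0 \<le> x"
proof (cases "s = 0")
  case True
  have "{x \<in> space (return borel (0::real)). 0 \<le> x} \<in> sets (return borel 0)"
    by simp
  then show ?thesis
    unfolding True gamma_law_def by (simp add: AE_return)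
next
  case False
  assume "0 \<le> s"
  with False have "0 < s" by simp
  from AE_gamma_law_pos[OF this] show ?thesis
    by eventually_elim simp
qed

lemma AE_gamma_law_pair:
  assumes "0 < a" "0 \<le> b"
  shows "AE p in gamma_law a \<Otimes>\<^sub>M gamma_law b. 0 < fst p \<and> 0 \<le> snd p"
  using assms
  by (intro AE_pair_measure_prodI AE_gamma_law_pos AE_gamma_law_nonneg)
     (simp_all add: prob_space_gamma_law prob_space_imp_sigma_finite)

lemma prob_space_gamma_law_pair:
  "0 < r \<Longrightarrow> r \<le> 1 \<Longrightarrow> prob_space (gamma_law r \<Otimes>\<^sub>M gamma_law (1 - r))"
  by (intro prob_space_pair prob_space_gamma_law) simp_all

lemma gamma_density_ratio_product:
  assumes a: "0 < a" and b: "0 < b" and x: "0 < x"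
  shows "gamma_density b g * g * gamma_density a (g * x)
       = x powr (a - 1) / (Gamma a * Gamma b)
         * (indicator {0<..} g * g powr (a + b - 1) * exp (- ((1 + x) * g)))"
proof (cases "0 < g")
  case g: True
  have "g powr (b - 1) * g = g powr b"
    using g by (simp add: powr_diff)
  moreover have "g powr b * g powr (a - 1) = g powr (a + b - 1)"
    using g by (simp add: powr_add[symmetric] algebra_simps)
  ultimately have pow: "g powr (b - 1) * g * (g * x) powr (a - 1) = g powr (a + b - 1) * x powr (a - 1)"
    using g x by (simp add: powr_mult)
  have exp: "exp (- g) * exp (- (g * x)) = exp (- ((1 + x) * g))"
    by (simp add: exp_add[symmetric] algebra_simps)
  have "gamma_density b g * g * gamma_density a (g * x)
      = (g powr (b - 1) * g * (g * x) powr (a - 1)) * (exp (- g) * exp (- (g * x))) / (Gamma a * Gamma b)"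
    using g x by (simp add: gamma_density_def mult_ac)
  also have "\<dots> = x powr (a - 1) / (Gamma a * Gamma b) * (indicator {0<..} g * g powr (a + b - 1) * exp (- ((1 + x) * g)))"
    unfolding pow exp using g by simp
  finally show ?thesis .
qed (simp add: gamma_density_def)

lemma nn_integral_gamma_ratio_kernel:
  assumes a: "0 < a" and b: "0 < b"
  shows "(\<integral>\<^sup>+g. ennreal (gamma_density b g * g * gamma_density a (g * x)) \<partial>lborel)
       = ennreal (beta_prime_density a b x)"
proof (cases "0 < x")
  case False
  have vanish: "gamma_density b g * g * gamma_density a (g * x) = 0" for g
    using False by (cases "0 < g") (auto simp: gamma_density_def zero_less_mult_iff)
  show ?thesis
    unfolding vanish using False by (simp add: beta_prime_density_def)
next
  case x: True
  have \<Gamma>: "0 < Gamma a" "0 < Gamma b" "0 < Gamma (a + b)"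
    using a b by (simp_all add: Gamma_real_pos)
  have "(\<integral>\<^sup>+g. ennreal (gamma_density b g * g * gamma_density a (g * x)) \<partial>lborel)
      = (\<integral>\<^sup>+g. ennreal (x powr (a - 1) / (Gamma a * Gamma b))
            * ennreal (indicator {0<..} g * g powr (a + b - 1) * exp (- ((1 + x) * g))) \<partial>lborel)"
    using x \<Gamma> by (simp add: gamma_density_ratio_product[OF a b] ennreal_mult'[symmetric])
  also have "\<dots> = ennreal (x powr (a - 1) / (Gamma a * Gamma b)) * ennreal (Gamma (a + b) / (1 + x) powr (a + b))"
    using x a b by (simp add: nn_integral_cmult nn_integral_gamma_kernel)
  also have "\<dots> = ennreal (beta_prime_density a b x)"
    unfolding beta_prime_density_def Beta_def powr_minus_divide
    using x \<Gamma> by (simp add: ennreal_mult'[symmetric])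
  finally show ?thesis .
qed

lemma gamma_ratio_law:
  assumes a: "0 < a" and b: "0 < b"
  shows "distr (gamma_law b \<Otimes>\<^sub>M gamma_law a) borel (\<lambda>(g, h). h / g)
       = density lborel (\<lambda>x. ennreal (beta_prime_density a b x))"
proof -
  have "distr (gamma_law b \<Otimes>\<^sub>M gamma_law a) borel (\<lambda>(g, h). h / g)
      = density lborel (\<lambda>x. \<integral>\<^sup>+g. ennreal (gamma_density b g * g * gamma_density a (g * x)) \<partial>lborel)"
    using a b
    by (simp add: gamma_law_density, intro distr_density_pair_divide)
       (auto simp: gamma_density_nonneg gamma_density_def)
  then show ?thesis
    by (simp add: nn_integral_gamma_ratio_kernel[OF a b])
qed

lemma sets_Q_law [measurable_cong, simp]: "sets (Q_law r) = sets borel"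
  by (simp add: Q_law_def)

lemma Q_law_scaled:
  assumes r: "0 < r" "r < 1"
  shows "distr (Q_law r) borel (\<lambda>q. (1 - r) / r * q)
       = density lborel (\<lambda>x. ennreal (beta_prime_density (1 - r) r x))"
proof -
  define q where "q x = indicator {0<..} x * ((1 - r) powr (1 - r) * r powr r / (Gamma (1 - r) * Gamma r)
      * (1 / (x powr r * (r + (1 - r) * x))))" for x
  have [measurable]: "q \<in> borel_measurable borel"
    unfolding q_def by measurable
  have \<Gamma>: "0 < Gamma r" "0 < Gamma (1 - r)"
    using r by (simp_all add: Gamma_real_pos)
  have rescaled: "q (x / ((1 - r) / r)) / ((1 - r) / r) = beta_prime_density (1 - r) r x" for x
  proof (cases "0 < x")
    case x: True
    define s u where "s = 1 - r" and "u = 1 + x"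
    have y: "x / ((1 - r) / r) = r * x / (1 - r)"
      by simp
    have e1: "(r * x / (1 - r)) powr r = r powr r * x powr r / (1 - r) powr r"
      using r x by (simp add: powr_mult powr_divide)
    have e2: "r + (1 - r) * (r * x / (1 - r)) = r * u"
      using r by (simp add: u_def field_simps)
    have e3: "(1 - r) powr (1 - r) = (1 - r) / (1 - r) powr r"
      using r by (simp add: powr_diff)
    have e4: "x powr (1 - r - 1) = 1 / x powr r"
      by (simp add: powr_minus_divide)
    have e5: "Beta (1 - r) r = Gamma (1 - r) * Gamma r"
      by (simp add: Beta_def)
    have e6: "(1 + x) powr (- (1 - r + r)) = 1 / u"
      using x by (simp add: u_def)
    have nz: "s \<noteq> 0" "r \<noteq> 0" "r powr r \<noteq> 0" "s powr r \<noteq> 0" "x powr r \<noteq> 0" "u \<noteq> 0"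
      using r x by (auto simp: s_def u_def)
    have "0 < r * x / (1 - r)"
      using r x by simp
    then show ?thesis
      unfolding q_def beta_prime_density_def e5 e6 y e1 e2 e3 e4 unfolding s_def[symmetric]
      using \<Gamma> nz x by (simp add: field_simps)
  next
    case False
    then have "\<not> 0 < x * r / (1 - r)"
      using r by (simp add: zero_less_mult_iff zero_less_divide_iff)
    then show ?thesis
      using False by (simp add: q_def beta_prime_density_def)
  qed
  have "Q_law r = density lborel (\<lambda>x. ennreal (q x))"
    by (simp add: Q_law_def q_def)
  then have "distr (Q_law r) borel (\<lambda>q. (1 - r) / r * q)
      = density lborel (\<lambda>x. ennreal (q (x / ((1 - r) / r)) / ((1 - r) / r)))"
    using r by (simp only:) (rule distr_density_lborel_scale; simp)
  then show ?thesis
    by (simp only: rescaled)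
qed

lemma gamma_ratio_eq_scaled_Q_law:
  assumes "0 < r" "r < 1"
  shows "distr (gamma_law r \<Otimes>\<^sub>M gamma_law (1 - r)) borel (\<lambda>(g, h). h / g)
       = distr (Q_law r) borel (\<lambda>q. (1 - r) / r * q)"
proof -
  have "0 < 1 - r"
    using assms by simp
  then show ?thesis
    using assms by (simp only: gamma_ratio_law Q_law_scaled)
qed

lemma prob_space_Q_law:
  assumes "0 < r" "r < 1"
  shows "prob_space (Q_law r)"
proof (rule prob_space_distrD)
  show "prob_space (distr (Q_law r) borel (\<lambda>q. (1 - r) / r * q))"
    using assms unfolding gamma_ratio_eq_scaled_Q_law[OF assms, symmetric]
    by (intro prob_space.prob_space_distr prob_space_gamma_law_pair) simp_all
qed simp

lemma sets_Z_law [measurable_cong, simp]: "sets (Z_law r \<mu>) = sets borel"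
  by (simp add: Z_law_def)

lemma distr_pair_Z_law:
  assumes "0 < r" "r \<le> 1" and [measurable]: "F \<in> borel_measurable (M \<Otimes>\<^sub>M borel)"
  shows "distr (M \<Otimes>\<^sub>M Z_law r \<mu>) borel F
       = distr (M \<Otimes>\<^sub>M (gamma_law r \<Otimes>\<^sub>M gamma_law (1 - r))) borel (\<lambda>(s, g, h). F (s, \<mu> * (g + h) / g))"
  unfolding Z_law_def using assms
  by (subst distr_pair_measure_distr_right) (simp_all add: prob_space_gamma_law_pair case_prod_unfold)

lemma Z_law_1_eq_Q_law:
  assumes r: "0 < r" "r < 1"
  shows "Z_law r 1 = distr (Q_law r) borel (\<lambda>q. 1 + (1 - r) / r * q)"
proof -
  let ?G = "gamma_law r \<Otimes>\<^sub>M gamma_law (1 - r)"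
  have pos: "AE p in ?G. 0 < fst p \<and> 0 \<le> snd p"
    using r by (intro AE_gamma_law_pair) simp_all
  have "Z_law r 1 = distr ?G borel (\<lambda>p. 1 + (\<lambda>(g, h). h / g) p)"
    unfolding Z_law_def
  proof (rule distr_cong_AE)
    show "AE p in ?G. (\<lambda>(g, h). 1 * (g + h) / g) p = 1 + (\<lambda>(g, h). h / g) p"
      using pos by eventually_elim (auto simp: field_simps)
  qed simp_all
  also have "\<dots> = distr (distr ?G borel (\<lambda>(g, h). h / g)) borel (\<lambda>t. 1 + t)"
    by (simp add: distr_distr o_def)
  also have "\<dots> = distr (Q_law r) borel (\<lambda>q. 1 + (1 - r) / r * q)"
    using r by (simp add: gamma_ratio_eq_scaled_Q_law distr_distr o_def)
  finally show ?thesis .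
qed

lemma weak_conv_rescaled_law:
  fixes r \<alpha> :: real and S :: "real measure"
  assumes S: "real_distribution S" and r: "0 < r" "r \<le> 1" and \<alpha>: "0 < \<alpha>"
  shows "weak_conv_filter
           (\<lambda>\<mu>. distr (distr (S \<Otimes>\<^sub>M Z_law r \<mu>) borel
                    (\<lambda>(s, z). s * z powr (1 / \<alpha>) / (1 + s * z powr (1 / \<alpha>))))
                  borel (\<lambda>y. \<mu> powr (- 1 / \<alpha>) * y))
           (distr (S \<Otimes>\<^sub>M Z_law r 1) borel (\<lambda>(s, z). s * z powr (1 / \<alpha>)))
           (at_right 0)"
proof -
  interpret S: real_distribution S by fact
  let ?G = "gamma_law r \<Otimes>\<^sub>M gamma_law (1 - r)"
  have [measurable_cong]: "sets S = sets borel"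
    by simp
  have prob: "prob_space (S \<Otimes>\<^sub>M ?G)"
    using r by (intro prob_space_pair S.prob_space_axioms prob_space_gamma_law_pair)
  have "AE \<omega> in S \<Otimes>\<^sub>M ?G. True \<and> (0 < fst (snd \<omega>) \<and> 0 \<le> snd (snd \<omega>))"
    using r
    by (intro AE_pair_measure_prodI AE_gamma_law_pair)
       (simp_all add: prob_space_gamma_law_pair prob_space_imp_sigma_finite S.sigma_finite_measure_axioms)
  then have pos: "AE \<omega> in S \<Otimes>\<^sub>M ?G. 0 < fst (snd \<omega>) \<and> 0 \<le> snd (snd \<omega>)"
    by simp
  define Y where "Y \<mu> = (\<lambda>(s, g, h). \<mu> powr (- (1 / \<alpha>)) *
      (s * (\<mu> * ((g + h) / g)) powr (1 / \<alpha>) / (1 + s * (\<mu> * ((g + h) / g)) powr (1 / \<alpha>))))" for \<mu>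
  define L where "L = (\<lambda>(s, g, h). s * ((g + h) / g) powr (1 / \<alpha>))"
  have [measurable]: "Y \<mu> \<in> borel_measurable (S \<Otimes>\<^sub>M ?G)" "L \<in> borel_measurable (S \<Otimes>\<^sub>M ?G)" for \<mu>
    unfolding Y_def L_def by measurable
  have family: "distr (distr (S \<Otimes>\<^sub>M Z_law r \<mu>) borel
                    (\<lambda>(s, z). s * z powr (1 / \<alpha>) / (1 + s * z powr (1 / \<alpha>))))
                  borel (\<lambda>y. \<mu> powr (- 1 / \<alpha>) * y)
      = distr (S \<Otimes>\<^sub>M ?G) borel (Y \<mu>)" for \<mu>
    using r by (subst distr_distr) (simp_all add: Y_def distr_pair_Z_law case_prod_unfold o_def)
  have limit: "distr (S \<Otimes>\<^sub>M Z_law r 1) borel (\<lambda>(s, z). s * z powr (1 / \<alpha>))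
      = distr (S \<Otimes>\<^sub>M ?G) borel L"
    using r by (simp add: L_def distr_pair_Z_law case_prod_unfold)
  have "AE \<omega> in S \<Otimes>\<^sub>M ?G. ((\<lambda>\<mu>. Y \<mu> \<omega>) \<longlongrightarrow> L \<omega>) (at_right 0)"
    using pos
  proof eventually_elim
    case (elim \<omega>)
    obtain s g h where \<omega>: "\<omega> = (s, g, h)"
      by (cases \<omega>) auto
    have "0 < (g + h) / g"
      using elim by (simp add: \<omega>)
    then show ?case
      using tendsto_rescaled_fraction[of "1 / \<alpha>" "(g + h) / g" s] \<alpha> by (simp add: \<omega> Y_def L_def)
  qed
  then show ?thesis
    unfolding family limit by (intro weak_conv_filter_at_right_0_of_AE_tendsto[OF prob]) simp_all
qed

theorem corollary1:
  fixes r \<alpha> :: real and S :: "real measure"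
  assumes r: "0 < r" "r \<le> 1"
    and \<alpha>: "0 < \<alpha>" "\<alpha> \<le> 1"
    and S_law: "real_distribution S"
    and S_char: "\<And>t. char S t = exp (- complex_of_real (\<bar>t\<bar> powr \<alpha>)
                    * exp (- \<i> * complex_of_real (pi * \<alpha> / 2 * sgn t)))"
  shows "weak_conv_filter
           (\<lambda>\<mu>. distr (distr (S \<Otimes>\<^sub>M Z_law r \<mu>) borel
                    (\<lambda>(s, z). s * z powr (1 / \<alpha>) / (1 + s * z powr (1 / \<alpha>))))
                  borel (\<lambda>y. \<mu> powr (- 1 / \<alpha>) * y))
           (distr (S \<Otimes>\<^sub>M Z_law r 1) borel (\<lambda>(s, z). s * z powr (1 / \<alpha>)))
           (at_right 0)
       \<and> distr (S \<Otimes>\<^sub>M Z_law r 1) borel (\<lambda>(s, z). s * z powr (1 / \<alpha>))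
         = distr (S \<Otimes>\<^sub>M (gamma_law r \<Otimes>\<^sub>M gamma_law (1 - r))) borel
             (\<lambda>(s, g, h). s * ((g + h) / g) powr (1 / \<alpha>))
       \<and> (r < 1 \<longrightarrow>
           distr (S \<Otimes>\<^sub>M Z_law r 1) borel (\<lambda>(s, z). s * z powr (1 / \<alpha>))
           = distr (S \<Otimes>\<^sub>M Q_law r) borel
               (\<lambda>(s, q). s * (1 + (1 - r) / r * q) powr (1 / \<alpha>)))"
proof -
  interpret S: real_distribution S by fact
  have gamma_form: "distr (S \<Otimes>\<^sub>M Z_law r 1) borel (\<lambda>(s, z). s * z powr (1 / \<alpha>))
      = distr (S \<Otimes>\<^sub>M (gamma_law r \<Otimes>\<^sub>M gamma_law (1 - r))) borel
          (\<lambda>(s, g, h). s * ((g + h) / g) powr (1 / \<alpha>))"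
    using r by (simp add: distr_pair_Z_law case_prod_unfold)
  have Q_form: "distr (S \<Otimes>\<^sub>M Z_law r 1) borel (\<lambda>(s, z). s * z powr (1 / \<alpha>))
      = distr (S \<Otimes>\<^sub>M Q_law r) borel (\<lambda>(s, q). s * (1 + (1 - r) / r * q) powr (1 / \<alpha>))"
    if "r < 1"
    using r that
    by (simp add: Z_law_1_eq_Q_law distr_pair_measure_distr_right prob_space_Q_law case_prod_unfold)
  show ?thesis
    using weak_conv_rescaled_law[OF S_law r \<alpha>(1)] gamma_form Q_form by blast
qed

end
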